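(* Let $H^2(\beta)$ be a weighted Hardy space on $\mathbb{D}$ with weights $\beta=(\beta_n)_{n\ge0}$, and let $\varphi$ be a holomorphic self-map of $\mathbb{D}$ such that $C_\varphi:H^2(\beta)\to H^2(\beta)$ is bounded. Then $C_\varphi^*$ is a composition operator (i.e. $C_\varphi^*=C_\psi$ for some map $\psi:\mathbb{D}\to\mathbb{D}$) if and only if $\varphi(z)=\delta z$ for some $\delta\in\mathbb{C}$ with $|\delta|\le1$.
   Context: $\mathbb{D}$ is the open unit disc. Let $(\beta_n)_{n\ge0}$ be a sequence with $\beta_0=1$, $\beta_n>0$ for all $n$, and $\liminf_n\beta_n^{1/n}\ge1$. The weighted Hardy space $H^2(\beta)$ consists of holomorphic $f(z)=\sum_{n\ge0}a_nz^n$ on $\mathbb{D}$ with $\|f\|^2=\sum_{n\ge0}|a_n|^2\beta_n^2<\infty$, with inner product $\langle f,g\rangle=\sum_n a_n\overline{b_n}\beta_n^2$ for $g=\sum b_nz^n$. It is a reproducing kernel Hilbert space with kernel $\kappa_w(z)=\sum_{n\ge0}\frac{\overline{w}^nz^n}{\beta_n^2}$. $C_\varphi f=f\circ\varphi$ and $C_\varphi^*$ is its Hilbert space adjoint. *)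

theory Defs
  imports "HOL-Complex_Analysis.Complex_Analysis"
begin

abbreviation disc :: "complex set" where "disc \<equiv> ball 0 1"

definition tcoeff :: "(complex \<Rightarrow> complex) \<Rightarrow> nat \<Rightarrow> complex" where
  "tcoeff f n = (deriv ^^ n) f 0 / of_nat (fact n)"

definition weight_seq :: "(nat \<Rightarrow> real) \<Rightarrow> bool" where
  "weight_seq \<beta> \<longleftrightarrow> \<beta> 0 = 1 \<and> (\<forall>n. \<beta> n > 0) \<and>
     Liminf sequentially (\<lambda>n. ereal (root n (\<beta> n))) \<ge> 1"

definition in_H2 :: "(nat \<Rightarrow> real) \<Rightarrow> (complex \<Rightarrow> complex) \<Rightarrow> bool" where
  "in_H2 \<beta> f \<longleftrightarrow> f holomorphic_on disc \<and>
     summable (\<lambda>n. (cmod (tcoeff f n))^2 * (\<beta> n)^2)"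

definition H2_norm :: "(nat \<Rightarrow> real) \<Rightarrow> (complex \<Rightarrow> complex) \<Rightarrow> real" where
  "H2_norm \<beta> f = sqrt (\<Sum>n. (cmod (tcoeff f n))^2 * (\<beta> n)^2)"

definition H2_inner :: "(nat \<Rightarrow> real) \<Rightarrow> (complex \<Rightarrow> complex) \<Rightarrow> (complex \<Rightarrow> complex) \<Rightarrow> complex" where
  "H2_inner \<beta> f g = (\<Sum>n. tcoeff f n * cnj (tcoeff g n) * of_real ((\<beta> n)^2))"

definition bounded_comp_op :: "(nat \<Rightarrow> real) \<Rightarrow> (complex \<Rightarrow> complex) \<Rightarrow> bool" where
  "bounded_comp_op \<beta> \<phi> \<longleftrightarrow> \<phi> holomorphic_on disc \<and> \<phi> ` disc \<subseteq> disc \<and>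
     (\<forall>f. in_H2 \<beta> f \<longrightarrow> in_H2 \<beta> (f \<circ> \<phi>)) \<and>
     (\<exists>C. \<forall>f. in_H2 \<beta> f \<longrightarrow> H2_norm \<beta> (f \<circ> \<phi>) \<le> C * H2_norm \<beta> f)"

definition adjoint_is_comp :: "(nat \<Rightarrow> real) \<Rightarrow> (complex \<Rightarrow> complex) \<Rightarrow> (complex \<Rightarrow> complex) \<Rightarrow> bool" where
  "adjoint_is_comp \<beta> \<phi> \<psi> \<longleftrightarrow> \<psi> ` disc \<subseteq> disc \<and>
     (\<forall>g. in_H2 \<beta> g \<longrightarrow> in_H2 \<beta> (g \<circ> \<psi>)) \<and>
     (\<forall>f g. in_H2 \<beta> f \<longrightarrow> in_H2 \<beta> g \<longrightarrow>
        H2_inner \<beta> (f \<circ> \<phi>) g = H2_inner \<beta> f (g \<circ> \<psi>))"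

end

theory Submission
  imports Defs
begin

text \<open>
  Testing the adjoint relation against monomials reads off Taylor coefficients, since
  \<open>\<langle>f, z\<^sup>k\<rangle> = a\<^sub>k(f) \<beta>\<^sub>k\<^sup>2\<close>. With \<open>f = 1, g = z\<close> it gives \<open>\<psi>(0) = 0\<close>; hence \<open>\<psi>\<^sup>n\<close> has no
  linear term for \<open>n \<noteq> 1\<close>, and \<open>f = z, g = z\<^sup>n\<close> shows \<open>a\<^sub>n(\<phi>) = 0\<close> for \<open>n \<noteq> 1\<close>. So
  \<open>\<phi>(z) = \<delta> z\<close>, and \<open>|\<delta>| \<le> 1\<close> because \<open>\<phi>\<close> maps the disc into itself. Conversely,
  composition with \<open>\<delta> z\<close> multiplies \<open>a\<^sub>n\<close> by \<open>\<delta>\<^sup>n\<close>, so its adjoint is composition with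
  \<open>cnj \<delta> z\<close>.
\<close>

lemma tcoeff_power: "tcoeff (\<lambda>z. z ^ k) n = (if n = k then 1 else 0)"
proof -
  have "(deriv ^^ n) (\<lambda>w. (w - 0) ^ k) 0 = pochhammer (of_nat (Suc k - n)) n * (0 - 0) ^ (k - n)"
    by (rule higher_deriv_power)
  then have deriv_n: "(deriv ^^ n) (\<lambda>w. w ^ k) 0 = pochhammer (of_nat (Suc k - n)) n * (0::complex) ^ (k - n)"
    by simp
  consider "n = k" | "n < k" | "k < n" by linarith
  then show ?thesis
  proof cases
    case 1
    then show ?thesis using deriv_n by (simp add: tcoeff_def flip: pochhammer_fact)
  next
    case 2
    then show ?thesis using deriv_n by (simp add: tcoeff_def)
  next
    case 3
    then have "Suc k - n = 0" by simp
    then show ?thesis using deriv_n 3 by (simp add: tcoeff_def pochhammer_0_left)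
  qed
qed

lemma in_H2_power: "in_H2 \<beta> (\<lambda>z. z ^ k)"
proof -
  have "(\<lambda>n. (cmod (tcoeff (\<lambda>z. z ^ k) n))\<^sup>2 * (\<beta> n)\<^sup>2) = (\<lambda>n. if n = k then (\<beta> k)\<^sup>2 else 0)"
    by (auto simp: tcoeff_power)
  then show ?thesis
    unfolding in_H2_def by (auto intro: holomorphic_intros)
qed

lemma H2_inner_power_right: "H2_inner \<beta> f (\<lambda>z. z ^ k) = tcoeff f k * of_real ((\<beta> k)\<^sup>2)"
proof -
  have "(\<lambda>n. tcoeff f n * cnj (tcoeff (\<lambda>z. z ^ k) n) * of_real ((\<beta> n)\<^sup>2))
      = (\<lambda>n. if n = k then tcoeff f k * of_real ((\<beta> k)\<^sup>2) else 0)"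
    by (auto simp: tcoeff_power)
  then show ?thesis
    unfolding H2_inner_def
    using sums_single[of k "\<lambda>_. tcoeff f k * of_real ((\<beta> k)\<^sup>2)"] by (simp add: sums_iff)
qed

lemma H2_inner_power_left: "H2_inner \<beta> (\<lambda>z. z ^ k) g = cnj (tcoeff g k) * of_real ((\<beta> k)\<^sup>2)"
proof -
  have "(\<lambda>n. tcoeff (\<lambda>z. z ^ k) n * cnj (tcoeff g n) * of_real ((\<beta> n)\<^sup>2))
      = (\<lambda>n. if n = k then cnj (tcoeff g k) * of_real ((\<beta> k)\<^sup>2) else 0)"
    by (auto simp: tcoeff_power)
  then show ?thesis
    unfolding H2_inner_def
    using sums_single[of k "\<lambda>_. cnj (tcoeff g k) * of_real ((\<beta> k)\<^sup>2)"] by (simp add: sums_iff)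
qed

lemma tcoeff_cong:
  assumes "\<And>z. z \<in> disc \<Longrightarrow> f z = g z"
  shows "tcoeff f n = tcoeff g n"
proof -
  have "eventually (\<lambda>z. f z = g z) (nhds 0)"
    using eventually_nhds_in_open[of disc 0] assms by (auto elim!: eventually_mono)
  then show ?thesis
    unfolding tcoeff_def by (simp add: higher_deriv_cong_ev)
qed

lemma tcoeff_sums:
  assumes "f holomorphic_on disc" "z \<in> disc"
  shows "(\<lambda>n. tcoeff f n * z ^ n) sums f z"
  using holomorphic_power_series[of f 0 1 z] assms by (simp add: tcoeff_def)

lemma holomorphic_eq_linear_if_tcoeff_eq_0:
  assumes "f holomorphic_on disc" and "\<And>n. n \<noteq> 1 \<Longrightarrow> tcoeff f n = 0" and "z \<in> disc"
  shows "f z = tcoeff f 1 * z"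
proof -
  have "(\<lambda>n. tcoeff f n * z ^ n) = (\<lambda>n. if n = 1 then tcoeff f 1 * z else 0)"
    using assms(2) by auto
  then have "(\<lambda>n. if n = 1 then tcoeff f 1 * z else 0) sums f z"
    using tcoeff_sums[OF assms(1,3)] by simp
  then show ?thesis
    using sums_single[of 1 "\<lambda>_. tcoeff f 1 * z"] sums_unique2 by blast
qed

lemma scale_image_disc:
  assumes "cmod c \<le> 1"
  shows "(\<lambda>z. c * z) ` disc \<subseteq> disc"
proof clarsimp
  fix z :: complex assume "cmod z < 1"
  moreover have "cmod (c * z) \<le> cmod z"
    using assms by (simp add: norm_mult mult_left_le_one_le)
  ultimately show "cmod (c * z) < 1" by simp
qed

lemma norm_le_1_if_scale_maps_disc:
  assumes "\<phi> ` disc \<subseteq> disc" and "\<forall>z\<in>disc. \<phi> z = c * z"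
  shows "cmod c \<le> 1"
proof (rule ccontr)
  assume "\<not> cmod c \<le> 1"
  then have "c \<noteq> 0" and "1 / c \<in> disc"
    by (auto simp: norm_divide divide_less_eq)
  then have "\<phi> (1 / c) = 1"
    using assms(2) by simp
  with assms(1) \<open>1 / c \<in> disc\<close> show False
    by fastforce
qed

lemma tcoeff_compose_scale:
  assumes "g holomorphic_on disc" and "cmod c \<le> 1"
  shows "tcoeff (g \<circ> (\<lambda>z. c * z)) n = c ^ n * tcoeff g n"
proof -
  have "c * w \<in> disc" if "w \<in> disc" for w
    using scale_image_disc[OF assms(2)] that by blast
  then have "(deriv ^^ n) (\<lambda>w. g (c * w)) 0 = c ^ n * (deriv ^^ n) g (c * 0)"
    by (intro higher_deriv_compose_linear[where S = disc and T = disc, OF assms(1)]) auto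
  then show ?thesis
    by (simp add: tcoeff_def o_def)
qed

lemma in_H2_compose_scale:
  assumes "in_H2 \<beta> g" and "cmod c \<le> 1"
  shows "in_H2 \<beta> (g \<circ> (\<lambda>z. c * z))"
proof -
  have g_holo: "g holomorphic_on disc"
    and g_summable: "summable (\<lambda>n. (cmod (tcoeff g n))\<^sup>2 * (\<beta> n)\<^sup>2)"
    using assms(1) unfolding in_H2_def by auto
  have "(g \<circ> (\<lambda>z. c * z)) holomorphic_on disc"
    using scale_image_disc[OF assms(2)]
    by (intro holomorphic_on_compose_gen[OF _ g_holo]) (auto intro: holomorphic_intros)
  moreover have "cmod (tcoeff (g \<circ> (\<lambda>z. c * z)) n) \<le> cmod (tcoeff g n)" for n
    using assms(2) by (simp add: tcoeff_compose_scale[OF g_holo] norm_mult norm_power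
        mult_left_le_one_le power_le_one)
  then have "(cmod (tcoeff (g \<circ> (\<lambda>z. c * z)) n))\<^sup>2 * (\<beta> n)\<^sup>2 \<le> (cmod (tcoeff g n))\<^sup>2 * (\<beta> n)\<^sup>2" for n
    by (intro mult_right_mono power_mono) auto
  then have "summable (\<lambda>n. (cmod (tcoeff (g \<circ> (\<lambda>z. c * z)) n))\<^sup>2 * (\<beta> n)\<^sup>2)"
    by (intro summable_comparison_test[OF _ g_summable]) auto
  ultimately show ?thesis
    unfolding in_H2_def by simp
qed

lemma adjoint_is_comp_scale:
  assumes "cmod c \<le> 1" and "\<forall>z\<in>disc. \<phi> z = c * z"
  shows "adjoint_is_comp \<beta> \<phi> (\<lambda>z. cnj c * z)"
  unfolding adjoint_is_comp_def
proof (intro conjI allI impI)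
  show "(\<lambda>z. cnj c * z) ` disc \<subseteq> disc"
    using assms(1) by (simp add: scale_image_disc)
next
  fix g assume "in_H2 \<beta> g"
  then show "in_H2 \<beta> (g \<circ> (\<lambda>z. cnj c * z))"
    using assms(1) by (simp add: in_H2_compose_scale)
next
  fix f g assume "in_H2 \<beta> f" "in_H2 \<beta> g"
  then have f_holo: "f holomorphic_on disc" and g_holo: "g holomorphic_on disc"
    unfolding in_H2_def by auto
  have f_coeff: "tcoeff (f \<circ> \<phi>) n = c ^ n * tcoeff f n" for n
  proof -
    have "tcoeff (f \<circ> \<phi>) n = tcoeff (f \<circ> (\<lambda>z. c * z)) n"
      using assms(2) by (intro tcoeff_cong) simp
    also have "\<dots> = c ^ n * tcoeff f n"
      using tcoeff_compose_scale[OF f_holo assms(1)] .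
    finally show ?thesis .
  qed
  have g_coeff: "tcoeff (g \<circ> (\<lambda>z. cnj c * z)) n = cnj c ^ n * tcoeff g n" for n
    using assms(1) by (simp add: tcoeff_compose_scale[OF g_holo])
  show "H2_inner \<beta> (f \<circ> \<phi>) g = H2_inner \<beta> f (g \<circ> (\<lambda>z. cnj c * z))"
    unfolding H2_inner_def f_coeff g_coeff by (simp add: complex_cnj_power mult_ac)
qed

lemma adjoint_is_comp_fixes_0:
  assumes "adjoint_is_comp \<beta> \<phi> \<psi>" and "\<beta> 0 \<noteq> 0"
  shows "\<psi> 0 = 0"
proof -
  have "H2_inner \<beta> ((\<lambda>z. z ^ 0) \<circ> \<phi>) (\<lambda>z. z ^ 1) = H2_inner \<beta> (\<lambda>z. z ^ 0) ((\<lambda>z. z ^ 1) \<circ> \<psi>)"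
    using assms(1) in_H2_power unfolding adjoint_is_comp_def by blast
  then have "H2_inner \<beta> (\<lambda>z. z ^ 0) (\<lambda>z. z ^ 1) = H2_inner \<beta> (\<lambda>z. z ^ 0) \<psi>"
    by (simp add: o_def)
  then have "cnj (tcoeff \<psi> 0) * of_real ((\<beta> 0)\<^sup>2) = 0"
    by (simp only: H2_inner_power_left H2_inner_power_right tcoeff_power) simp
  with assms(2) show ?thesis
    by (simp add: tcoeff_def)
qed

lemma tcoeff_1_power_eq_0:
  assumes "\<psi> holomorphic_on disc" and "\<psi> 0 = 0" and "n \<noteq> 1"
  shows "tcoeff (\<lambda>z. \<psi> z ^ n) 1 = 0"
proof -
  have "(\<psi> has_field_derivative deriv \<psi> 0) (at 0)"
    using assms(1) by (intro holomorphic_derivI[of _ disc]) auto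
  then have "((\<lambda>z. \<psi> z ^ n) has_field_derivative of_nat n * \<psi> 0 ^ (n - 1) * deriv \<psi> 0) (at 0)"
    by (auto intro!: derivative_eq_intros)
  moreover have "of_nat n * \<psi> 0 ^ (n - 1) = 0"
    using assms(2,3) by (cases "n = 0") auto
  ultimately show ?thesis
    by (simp add: tcoeff_def DERIV_imp_deriv)
qed

lemma adjoint_is_comp_imp_linear:
  assumes adj: "adjoint_is_comp \<beta> \<phi> \<psi>" and "\<phi> holomorphic_on disc" and "\<forall>n. \<beta> n \<noteq> 0"
    and "z \<in> disc"
  shows "\<phi> z = tcoeff \<phi> 1 * z"
proof (rule holomorphic_eq_linear_if_tcoeff_eq_0)
  have "in_H2 \<beta> ((\<lambda>z. z ^ 1) \<circ> \<psi>)"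
    using adj in_H2_power unfolding adjoint_is_comp_def by blast
  then have \<psi>_holo: "\<psi> holomorphic_on disc"
    by (simp add: in_H2_def o_def)
  have \<psi>_0: "\<psi> 0 = 0"
    using adjoint_is_comp_fixes_0 adj assms(3) by blast
  fix n :: nat assume "n \<noteq> 1"
  have "H2_inner \<beta> ((\<lambda>z. z ^ 1) \<circ> \<phi>) (\<lambda>z. z ^ n) = H2_inner \<beta> (\<lambda>z. z ^ 1) ((\<lambda>z. z ^ n) \<circ> \<psi>)"
    using adj in_H2_power unfolding adjoint_is_comp_def by blast
  moreover have "(\<lambda>z. z ^ 1) \<circ> \<phi> = \<phi>"
    by (simp add: o_def)
  ultimately have "tcoeff \<phi> n * of_real ((\<beta> n)\<^sup>2) = cnj (tcoeff ((\<lambda>z. z ^ n) \<circ> \<psi>) 1) * of_real ((\<beta> 1)\<^sup>2)"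
    by (simp only: H2_inner_power_left H2_inner_power_right)
  also have "\<dots> = 0"
    using tcoeff_1_power_eq_0[OF \<psi>_holo \<psi>_0 \<open>n \<noteq> 1\<close>] by (simp add: o_def)
  finally show "tcoeff \<phi> n = 0"
    using assms(3) by simp
qed (use assms(2,4) in auto)

theorem theorem3p3:
  fixes \<beta> :: "nat \<Rightarrow> real" and \<phi> :: "complex \<Rightarrow> complex"
  assumes "weight_seq \<beta>"
    and "bounded_comp_op \<beta> \<phi>"
  shows "(\<exists>\<psi>. adjoint_is_comp \<beta> \<phi> \<psi>) \<longleftrightarrow>
         (\<exists>\<delta>::complex. cmod \<delta> \<le> 1 \<and> (\<forall>z\<in>disc. \<phi> z = \<delta> * z))"
proof
  assume "\<exists>\<psi>. adjoint_is_comp \<beta> \<phi> \<psi>"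
  then obtain \<psi> where adj: "adjoint_is_comp \<beta> \<phi> \<psi>" by blast
  have \<phi>_holo: "\<phi> holomorphic_on disc" and \<phi>_self: "\<phi> ` disc \<subseteq> disc"
    using assms(2) unfolding bounded_comp_op_def by auto
  have "\<forall>n. \<beta> n > 0"
    using assms(1) unfolding weight_seq_def by blast
  then have "\<forall>n. \<beta> n \<noteq> 0"
    by (metis less_irrefl)
  then have linear: "\<forall>z\<in>disc. \<phi> z = tcoeff \<phi> 1 * z"
    using adjoint_is_comp_imp_linear[OF adj \<phi>_holo] by blast
  moreover have "cmod (tcoeff \<phi> 1) \<le> 1"
    using norm_le_1_if_scale_maps_disc[OF \<phi>_self linear] .
  ultimately show "\<exists>\<delta>. cmod \<delta> \<le> 1 \<and> (\<forall>z\<in>disc. \<phi> z = \<delta> * z)" by blast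
next
  assume "\<exists>\<delta>. cmod \<delta> \<le> 1 \<and> (\<forall>z\<in>disc. \<phi> z = \<delta> * z)"
  then show "\<exists>\<psi>. adjoint_is_comp \<beta> \<phi> \<psi>"
    using adjoint_is_comp_scale by blast
qed

end
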